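(* Let $T>0$ and $u\in\mathcal{VT}_1^+(T)$. Then: (1) $\lim_{|\mathbf{x}|\to\infty}u(\mathbf{x})=0$ and there is $\mathbf{z}_0\in\mathbb{R}^N$ such that for all $\mathbf{x}$, $0<u(\mathbf{z}_0)e^{-|\mathbf{x}-\mathbf{z}_0|^2/(4T)}\le u(\mathbf{x})\le u(\mathbf{z}_0)\le(4\pi T)^{-N/2}$; (2) $\lim_{|\mathbf{x}|\to\infty}|\nabla u(\mathbf{x})|=0$ and for all $\mathbf{x}$, $|\nabla u(\mathbf{x})|^2\le\frac{4\pi}{e}(4\pi T)^{-\frac{N+2}{2}}u(\mathbf{x})\le\frac{4\pi}{e}(4\pi T)^{-N-1}$; (3) $|\nabla^2u|\in L^1(\mathbb{R}^N)$ and there is $C_1=C_1(N)>0$ with $\int_{\mathbb{R}^N}|\nabla^2u|\,d\mathcal{L}^N\le C_1T^{-1}$.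
   Context: For positive $U\in C^2(\mathbb{R}^N)$, $\tau(U)=\sup\{\tau\ge0:2\tau\nabla^2\log U+g_{\mathbb{R}}\ge0\}$ (inequality of symmetric matrices); $\mathcal{VT}_1^+(T)=\{u\in C^2\cap L^1(\mathbb{R}^N):u>0,\tau(u)\ge T,\int_{\mathbb{R}^N}u\,d\mathcal{L}^N=1\}$. *)

theory Defs
  imports "HOL-Analysis.Analysis"
begin

definition grad :: "(real^'n \<Rightarrow> real) \<Rightarrow> real^'n \<Rightarrow> real^'n" where
  "grad f x = (\<chi> i. frechet_derivative f (at x) (axis i 1))"

definition hess :: "(real^'n \<Rightarrow> real) \<Rightarrow> real^'n \<Rightarrow> real^'n^'n" where
  "hess f x = (\<chi> i j. frechet_derivative (\<lambda>y. grad f y $ i) (at x) (axis j 1))"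

definition C2 :: "(real^'n \<Rightarrow> real) \<Rightarrow> bool" where
  "C2 f \<longleftrightarrow> (\<forall>x. f differentiable (at x)) \<and> (\<forall>x. grad f differentiable (at x))
            \<and> continuous_on UNIV (hess f)"

definition psd :: "real^'n^'n \<Rightarrow> bool" where
  "psd A \<longleftrightarrow> (\<forall>v. 0 \<le> v \<bullet> (A *v v))"

definition tau :: "(real^'n \<Rightarrow> real) \<Rightarrow> ereal" where
  "tau U = Sup (ereal ` {t. t \<ge> 0 \<and>
      (\<forall>x. psd ((2 * t) *\<^sub>R hess (\<lambda>y. ln (U y)) x + mat 1))})"

definition VT1plus :: "real \<Rightarrow> (real^'n \<Rightarrow> real) set" where
  "VT1plus T = {u. C2 u \<and> integrable lborel u \<and> (\<forall>x. u x > 0) \<and> tau u \<ge> ereal T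
                  \<and> integral\<^sup>L lborel u = 1}"

end

theory Submission
  imports Defs "HOL-Probability.Distributions" "HOL-Real_Asymp.Real_Asymp"
begin

(* The hypothesis tau(u) >= T says that ln u + |x|^2/(4T) is convex, so
   u(x + v) >= u(x) exp(<grad u(x), v>/u(x) - |v|^2/(4T)).  Completing the square and
   integrating in v against the unit mass of u gives
   u(x) exp(T |grad u(x)|^2 / u(x)^2) <= (4 pi T)^(-N/2); this bounds u and, with
   ln y <= y/e, also |grad u|^2 / u.  Adding the lower bounds at v and -v bounds u(x) by the
   mass of u in the unit ball around x, so u vanishes at infinity and attains its maximum,
   where the gradient vanishes and the Gaussian lower bound follows.
   For the Hessian, v . hess u v >= -u |v|^2/(2T), so the diagonal entries of
   hess u + u/(2T) are nonnegative and control the whole matrix.  They are pointwise limits of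
   nonnegative damped second differences whose integrals are at most 1/(2T), and Fatou's lemma
   gives the L^1 bound N^2/T. *)

section \<open>Gradient and Hessian along lines\<close>

lemma has_derivative_grad:
  fixes g :: "real^'n \<Rightarrow> real"
  assumes "g differentiable (at y)"
  shows "(g has_derivative (\<lambda>h. grad g y \<bullet> h)) (at y)"
proof -
  let ?D = "frechet_derivative g (at y)"
  have D: "(g has_derivative ?D) (at y)"
    using assms frechet_derivative_works by blast
  have "?D h = grad g y \<bullet> h" for h
  proof -
    have "?D h = ?D (\<Sum>i\<in>UNIV. h $ i *\<^sub>R axis i 1)"
      using basis_expansion[of h] by (simp add: scalar_mult_eq_scaleR)
    also have "\<dots> = (\<Sum>i\<in>UNIV. h $ i * ?D (axis i 1))"
      using has_derivative_linear[OF D] by (simp add: linear_sum linear_scale)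
    finally show ?thesis
      by (simp add: grad_def inner_vec_def mult.commute)
  qed
  then have "?D = (\<lambda>h. grad g y \<bullet> h)" by (rule ext)
  with D show ?thesis by simp
qed

lemma grad_nth_eq_hess_row: "grad (\<lambda>y. grad g y $ i) y = hess g y $ i"
  by (simp add: grad_def hess_def vec_eq_iff)

lemma differentiable_grad_nth:
  "grad g differentiable (at y) \<Longrightarrow> (\<lambda>y. grad g y $ i) differentiable (at y)"
  using differentiable_chain_at[OF _ bounded_linear_imp_differentiable[OF bounded_linear_vec_nth]]
  by (simp add: o_def)

lemma has_real_derivative_along_line:
  fixes g :: "real^'n \<Rightarrow> real"
  assumes "g differentiable (at (x + t *\<^sub>R v))"
  shows "((\<lambda>t. g (x + t *\<^sub>R v)) has_real_derivative grad g (x + t *\<^sub>R v) \<bullet> v) (at t)"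
proof -
  have "((\<lambda>t. x + t *\<^sub>R v) has_derivative (\<lambda>h. h *\<^sub>R v)) (at t)"
    by (auto intro!: derivative_eq_intros)
  from has_derivative_compose[OF this has_derivative_grad[OF assms]] show ?thesis
    by (simp add: has_field_derivative_def o_def mult.commute[of _ "grad g (x + t *\<^sub>R v) \<bullet> v"])
qed

lemma has_real_derivative_grad_along_line:
  fixes g :: "real^'n \<Rightarrow> real"
  assumes "grad g differentiable (at (x + t *\<^sub>R v))"
  shows "((\<lambda>t. grad g (x + t *\<^sub>R v) \<bullet> v) has_real_derivative v \<bullet> (hess g (x + t *\<^sub>R v) *v v)) (at t)"
proof -
  have "((\<lambda>t. \<Sum>i\<in>UNIV. v $ i * grad g (x + t *\<^sub>R v) $ i) has_real_derivative
        (\<Sum>i\<in>UNIV. v $ i * (hess g (x + t *\<^sub>R v) $ i \<bullet> v))) (at t)"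
    using has_real_derivative_along_line[OF differentiable_grad_nth[OF assms]]
    by (intro DERIV_sum DERIV_cmult) (simp add: grad_nth_eq_hess_row)
  then show ?thesis
    by (simp add: inner_vec_def matrix_vector_mult_def mult.commute)
qed

lemma second_order_taylor:
  fixes g :: "real^'n \<Rightarrow> real"
  assumes "\<And>y. g differentiable (at y)" and "\<And>y. grad g differentiable (at y)"
  obtains t where "0 < t" "t < 1"
    "g (x + v) = g x + grad g x \<bullet> v + (v \<bullet> (hess g (x + t *\<^sub>R v) *v v)) / 2"
proof -
  define D where "D m = [\<lambda>t. g (x + t *\<^sub>R v), \<lambda>t. grad g (x + t *\<^sub>R v) \<bullet> v,
    \<lambda>t. v \<bullet> (hess g (x + t *\<^sub>R v) *v v)] ! m" for m
  have "DERIV (D m) t :> D (Suc m) t" if m: "m < 2" for m t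
  proof -
    consider "m = 0" | "m = Suc 0" using m by (auto simp: less_2_cases_iff)
    then show ?thesis
      by cases (simp_all add: D_def has_real_derivative_along_line has_real_derivative_grad_along_line assms)
  qed
  from Taylor[of 2 D "D 0" 0 1 0 1] this obtain t where "0 < t" "t < 1"
    "D 0 1 = (\<Sum>m<2. D m 0 / fact m * (1 - 0) ^ m) + D 2 t / fact 2 * (1 - 0) ^ 2"
    by auto
  with that show ?thesis
    by (simp add: D_def numeral_2_eq_2)
qed

lemma inner_axis_matrix_vector_axis: "axis i 1 \<bullet> ((A::real^'n^'n) *v axis j 1) = A $ i $ j"
proof -
  have "(A *v axis j 1) $ i = A $ i $ j"
    by (simp add: matrix_vector_mult_def axis_def if_distrib cong: if_cong)
  then show ?thesis
    by (simp add: inner_axis')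
qed

lemma second_order_taylor_axis:
  fixes g :: "real^'n \<Rightarrow> real"
  assumes "\<And>y. g differentiable (at y)" and "\<And>y. grad g differentiable (at y)"
  obtains \<xi> where "dist \<xi> x \<le> \<bar>h\<bar>"
    "g (x + h *\<^sub>R axis i 1) = g x + h * grad g x $ i + h\<^sup>2 / 2 * hess g \<xi> $ i $ i"
proof -
  obtain t where "0 < t" "t < 1" and taylor: "g (x + h *\<^sub>R axis i 1) = g x + grad g x \<bullet> (h *\<^sub>R axis i 1)
      + ((h *\<^sub>R axis i 1) \<bullet> (hess g (x + t *\<^sub>R h *\<^sub>R axis i 1) *v (h *\<^sub>R axis i 1))) / 2"
    using second_order_taylor[OF assms] by blast
  show ?thesis
  proof
    show "dist (x + t *\<^sub>R h *\<^sub>R axis i 1) x \<le> \<bar>h\<bar>"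
      using \<open>0 < t\<close> \<open>t < 1\<close> by (simp add: dist_norm abs_mult mult_left_le_one_le)
    show "g (x + h *\<^sub>R axis i 1) = g x + h * grad g x $ i + h\<^sup>2 / 2 * hess g (x + t *\<^sub>R h *\<^sub>R axis i 1) $ i $ i"
      using taylor by (simp add: inner_axis matrix_vector_mult_scaleR inner_axis_matrix_vector_axis power2_eq_square)
  qed
qed

lemma mixed_second_difference_eq_hess:
  fixes g :: "real^'n \<Rightarrow> real"
  assumes "\<And>y. g differentiable (at y)" and "\<And>y. grad g differentiable (at y)" and "h > 0"
  obtains \<xi> where "dist \<xi> x \<le> 2 * h"
    "g (x + h *\<^sub>R axis j 1 + h *\<^sub>R axis i 1) - g (x + h *\<^sub>R axis i 1) - g (x + h *\<^sub>R axis j 1) + g x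
      = h\<^sup>2 * hess g \<xi> $ i $ j"
proof -
  define ei ej where "ei = (axis i 1 :: real^'n)" and "ej = (axis j 1 :: real^'n)"
  define \<psi> where "\<psi> s = g ((x + h *\<^sub>R ej) + s *\<^sub>R ei) - g (x + s *\<^sub>R ei)" for s
  define \<psi>' where "\<psi>' s = grad g ((x + h *\<^sub>R ej) + s *\<^sub>R ei) \<bullet> ei - grad g (x + s *\<^sub>R ei) \<bullet> ei" for s
  have "DERIV \<psi> s :> \<psi>' s" for s
    unfolding \<psi>_def \<psi>'_def by (intro DERIV_diff has_real_derivative_along_line assms)
  then obtain s where s: "0 < s" "s < h" "\<psi> h - \<psi> 0 = h * \<psi>' s"
    using MVT2[OF \<open>h > 0\<close>, of \<psi> \<psi>'] by auto
  define \<kappa> where "\<kappa> t = grad g ((x + s *\<^sub>R ei) + t *\<^sub>R ej) $ i" for t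
  define \<kappa>' where "\<kappa>' t = hess g ((x + s *\<^sub>R ei) + t *\<^sub>R ej) $ i \<bullet> ej" for t
  have "DERIV \<kappa> t :> \<kappa>' t" for t
    using has_real_derivative_along_line[OF differentiable_grad_nth[OF assms(2)]]
    unfolding \<kappa>_def \<kappa>'_def grad_nth_eq_hess_row .
  then obtain t where t: "0 < t" "t < h" "\<kappa> h - \<kappa> 0 = h * \<kappa>' t"
    using MVT2[OF \<open>h > 0\<close>, of \<kappa> \<kappa>'] by auto
  show ?thesis
  proof
    show "dist ((x + s *\<^sub>R ei) + t *\<^sub>R ej) x \<le> 2 * h"
      using s t norm_triangle_ineq[of "s *\<^sub>R ei" "t *\<^sub>R ej"]
      by (simp add: dist_norm ei_def ej_def)
    have "\<kappa> h - \<kappa> 0 = \<psi>' s"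
      by (simp add: \<kappa>_def \<psi>'_def ei_def inner_axis algebra_simps)
    then have "\<psi> h - \<psi> 0 = h\<^sup>2 * hess g ((x + s *\<^sub>R ei) + t *\<^sub>R ej) $ i $ j"
      using s(3) t(3) by (simp add: \<kappa>'_def ej_def inner_axis power2_eq_square)
    then show "g (x + h *\<^sub>R axis j 1 + h *\<^sub>R axis i 1) - g (x + h *\<^sub>R axis i 1) - g (x + h *\<^sub>R axis j 1) + g x
      = h\<^sup>2 * hess g ((x + s *\<^sub>R ei) + t *\<^sub>R ej) $ i $ j"
      by (simp add: \<psi>_def ei_def ej_def algebra_simps)
  qed
qed

lemma LIMSEQ_dist_le_inverse_Suc:
  fixes \<xi> :: "nat \<Rightarrow> 'a::metric_space"
  assumes "\<And>n. dist (\<xi> n) x \<le> c * inverse (real (Suc n))"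
  shows "\<xi> \<longlonglongrightarrow> x"
proof -
  have "\<forall>n. norm (dist (\<xi> n) x) \<le> c * inverse (real (Suc n))"
    using assms by simp
  from Lim_null_comparison[OF always_eventually[OF this]
      tendsto_mult_right_zero[OF LIMSEQ_inverse_real_of_nat]]
  show ?thesis
    by (rule tendsto_dist_iff[THEN iffD2])
qed

lemma hess_symmetric:
  assumes "C2 g"
  shows "hess g x $ i $ j = hess g x $ j $ i"
proof -
  have d: "\<And>y. g differentiable (at y)" "\<And>y. grad g differentiable (at y)"
    and "isCont (hess g) x"
    using assms by (auto simp: C2_def continuous_on_eq_continuous_at)
  define h where "h n = inverse (real (Suc n))" for n
  have h: "h n > 0" for n by (simp add: h_def)
  define \<Delta> where "\<Delta> n = g (x + h n *\<^sub>R axis j 1 + h n *\<^sub>R axis i 1) - g (x + h n *\<^sub>R axis i 1)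
    - g (x + h n *\<^sub>R axis j 1) + g x" for n
  have "\<exists>\<xi>. dist \<xi> x \<le> 2 * h n \<and> \<Delta> n = (h n)\<^sup>2 * hess g \<xi> $ i $ j" for n
  proof -
    obtain \<xi> where "dist \<xi> x \<le> 2 * h n" "\<Delta> n = (h n)\<^sup>2 * hess g \<xi> $ i $ j"
      using mixed_second_difference_eq_hess[OF d h] unfolding \<Delta>_def .
    then show ?thesis by blast
  qed
  then obtain \<xi> where \<xi>: "\<And>n. dist (\<xi> n) x \<le> 2 * h n" "\<And>n. \<Delta> n = (h n)\<^sup>2 * hess g (\<xi> n) $ i $ j"
    by metis
  have "\<exists>\<zeta>. dist \<zeta> x \<le> 2 * h n \<and> \<Delta> n = (h n)\<^sup>2 * hess g \<zeta> $ j $ i" for n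
  proof -
    have "\<Delta> n = g (x + h n *\<^sub>R axis i 1 + h n *\<^sub>R axis j 1) - g (x + h n *\<^sub>R axis j 1)
      - g (x + h n *\<^sub>R axis i 1) + g x"
      by (simp add: \<Delta>_def algebra_simps)
    moreover obtain \<zeta> where "dist \<zeta> x \<le> 2 * h n" "g (x + h n *\<^sub>R axis i 1 + h n *\<^sub>R axis j 1)
      - g (x + h n *\<^sub>R axis j 1) - g (x + h n *\<^sub>R axis i 1) + g x = (h n)\<^sup>2 * hess g \<zeta> $ j $ i"
      using mixed_second_difference_eq_hess[OF d h] .
    ultimately show ?thesis by auto
  qed
  then obtain \<zeta> where \<zeta>: "\<And>n. dist (\<zeta> n) x \<le> 2 * h n" "\<And>n. \<Delta> n = (h n)\<^sup>2 * hess g (\<zeta> n) $ j $ i"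
    by metis
  have "hess g (\<xi> n) $ i $ j = hess g (\<zeta> n) $ j $ i" for n
    using \<xi>(2)[of n] \<zeta>(2)[of n] h[of n] by simp
  then have "(\<lambda>n. hess g (\<xi> n) $ i $ j) = (\<lambda>n. hess g (\<zeta> n) $ j $ i)"
    by (rule ext)
  moreover have "(\<lambda>n. hess g (\<xi> n) $ i $ j) \<longlonglongrightarrow> hess g x $ i $ j"
    using \<xi>(1) unfolding h_def
    by (intro tendsto_vec_nth isCont_tendsto_compose[OF \<open>isCont (hess g) x\<close>] LIMSEQ_dist_le_inverse_Suc)
  moreover have "(\<lambda>n. hess g (\<zeta> n) $ j $ i) \<longlonglongrightarrow> hess g x $ j $ i"
    using \<zeta>(1) unfolding h_def
    by (intro tendsto_vec_nth isCont_tendsto_compose[OF \<open>isCont (hess g) x\<close>] LIMSEQ_dist_le_inverse_Suc)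
  ultimately show ?thesis
    using LIMSEQ_unique by auto
qed

section \<open>Semiconvexity of the logarithm\<close>

lemma hess_ln_quadratic_lower_bound:
  assumes "ereal T \<le> tau U" and "T \<ge> 0"
  shows "0 \<le> 2 * T * (v \<bullet> (hess (\<lambda>y. ln (U y)) x *v v)) + v \<bullet> v"
proof -
  let ?q = "v \<bullet> (hess (\<lambda>y. ln (U y)) x *v v)"
  define S where "S = {t. t \<ge> 0 \<and> (\<forall>x. psd ((2 * t) *\<^sub>R hess (\<lambda>y. ln (U y)) x + mat 1))}"
  have admissible: "0 \<le> 2 * t * ?q + v \<bullet> v" if "t \<in> S" for t
  proof -
    have "0 \<le> v \<bullet> (((2 * t) *\<^sub>R hess (\<lambda>y. ln (U y)) x + mat 1) *v v)"
      using that unfolding S_def psd_def by blast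
    then show ?thesis
      by (simp add: matrix_vector_mult_add_rdistrib scaleR_matrix_vector_assoc[symmetric] inner_add_right)
  qed
  show ?thesis
  proof (cases "?q \<ge> 0")
    case True
    with \<open>T \<ge> 0\<close> show ?thesis by simp
  next
    case False
    have "t \<le> (v \<bullet> v) / (- 2 * ?q)" if "t \<in> S" for t
      using admissible[OF that] False by (simp add: field_simps)
    then have "tau U \<le> ereal ((v \<bullet> v) / (- 2 * ?q))"
      unfolding tau_def S_def[symmetric] by (intro Sup_least) auto
    from order_trans[OF assms(1) this] have "T \<le> (v \<bullet> v) / (- 2 * ?q)"
      by simp
    with False show ?thesis by (simp add: field_simps)
  qed
qed

lemma semiconvex_lower_bound:
  fixes g :: "real^'n \<Rightarrow> real"
  assumes "\<And>y. g differentiable (at y)" and "\<And>y. grad g differentiable (at y)" and "T > 0"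
    and semiconvex: "\<And>y w. 0 \<le> 2 * T * (w \<bullet> (hess g y *v w)) + w \<bullet> w"
  shows "g x + grad g x \<bullet> v - (v \<bullet> v) / (4 * T) \<le> g (x + v)"
proof -
  obtain t where "g (x + v) = g x + grad g x \<bullet> v + (v \<bullet> (hess g (x + t *\<^sub>R v) *v v)) / 2"
    using second_order_taylor[OF assms(1,2)] by blast
  moreover have "0 \<le> (v \<bullet> (hess g (x + t *\<^sub>R v) *v v)) / 2 + (v \<bullet> v) / (4 * T)"
    using semiconvex[where y="x + t *\<^sub>R v" and w=v] \<open>T > 0\<close> by (simp add: field_simps)
  ultimately show ?thesis by linarith
qed

section \<open>Integrals over Euclidean space\<close>

lemma nn_integral_exp_neg_square:
  assumes "T > (0::real)"
  shows "(\<integral>\<^sup>+y. ennreal (exp (- y\<^sup>2 / (4 * T))) \<partial>lborel) = ennreal (sqrt (4 * pi * T))"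
proof -
  define s where "s = sqrt (2 * T)"
  have s: "s > 0" "s\<^sup>2 = 2 * T" using assms by (auto simp: s_def)
  have "exp (- y\<^sup>2 / (4 * T)) = sqrt (4 * pi * T) * normal_density 0 s y" for y
  proof -
    have "sqrt (2 * pi * s\<^sup>2) = sqrt (4 * pi * T)" using s by simp
    with s assms show ?thesis unfolding normal_density_def by (simp add: field_simps)
  qed
  then have "(\<integral>\<^sup>+y. ennreal (exp (- y\<^sup>2 / (4 * T))) \<partial>lborel)
      = ennreal (sqrt (4 * pi * T)) * (\<integral>\<^sup>+y. ennreal (normal_density 0 s y) \<partial>lborel)"
    using assms by (simp add: ennreal_mult nn_integral_cmult)
  also have "(\<integral>\<^sup>+y. ennreal (normal_density 0 s y) \<partial>lborel) = 1"
    using integrable_normal_density[OF s(1)] integral_normal_density[OF s(1)]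
    by (subst nn_integral_eq_integral) auto
  finally show ?thesis by simp
qed

lemma nn_integral_exp_neg_inner:
  assumes "T > (0::real)"
  shows "(\<integral>\<^sup>+v. ennreal (exp (- (v \<bullet> v) / (4 * T))) \<partial>(lborel :: 'a::euclidean_space measure))
     = ennreal ((4 * pi * T) powr (real DIM('a) / 2))"
proof -
  have "- (v \<bullet> v) / (4 * T) = (\<Sum>b\<in>Basis. - (v \<bullet> b)\<^sup>2 / (4 * T))" for v :: 'a
    by (simp add: euclidean_inner[of v v] power2_eq_square sum_divide_distrib sum_negf)
  then have "ennreal (exp (- (v \<bullet> v) / (4 * T)))
      = (\<Prod>b\<in>Basis. ennreal (exp (- (v \<bullet> b)\<^sup>2 / (4 * T))))" for v :: 'a
    by (simp add: exp_sum prod_ennreal)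
  then have "(\<integral>\<^sup>+v. ennreal (exp (- (v \<bullet> v) / (4 * T))) \<partial>(lborel :: 'a measure))
      = (\<Prod>b\<in>(Basis::'a set). \<integral>\<^sup>+y. ennreal (exp (- y\<^sup>2 / (4 * T))) \<partial>lborel)"
    by (simp only:) (rule nn_integral_lborel_prod, auto)
  also have "\<dots> = ennreal (sqrt (4 * pi * T) ^ DIM('a))"
    using assms by (subst nn_integral_exp_neg_square[OF assms]) (simp add: ennreal_power)
  also have "sqrt (4 * pi * T) ^ DIM('a) = (4 * pi * T) powr (real DIM('a) / 2)"
    using assms by (simp add: sqrt_def root_powr_inverse powr_realpow[symmetric] powr_powr)
  finally show ?thesis .
qed

lemma nn_integral_lborel_translate:
  fixes f :: "'a::euclidean_space \<Rightarrow> ennreal"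
  assumes [measurable]: "f \<in> borel_measurable borel"
  shows "(\<integral>\<^sup>+v. f (c + v) \<partial>lborel) = (\<integral>\<^sup>+v. f v \<partial>lborel)"
  by (subst lborel_distr_plus[of c, symmetric]) (simp add: nn_integral_distr)

lemma nn_integral_lborel_reflect:
  fixes f :: "'a::euclidean_space \<Rightarrow> ennreal"
  assumes [measurable]: "f \<in> borel_measurable borel"
  shows "(\<integral>\<^sup>+v. f (c - v) \<partial>lborel) = (\<integral>\<^sup>+v. f v \<partial>lborel)"
proof -
  have "lborel = distr lborel borel (\<lambda>v::'a. c - v)"
    using lborel_affine[of "-1" c] by (simp add: density_1)
  then have "(\<integral>\<^sup>+v. f v \<partial>lborel) = (\<integral>\<^sup>+v. f v \<partial>distr lborel borel (\<lambda>v::'a. c - v))"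
    by simp
  then show ?thesis
    by (simp add: nn_integral_distr)
qed

lemma integrable_lborel_translate:
  fixes f :: "'a::euclidean_space \<Rightarrow> real"
  assumes "integrable lborel f"
  shows "integrable lborel (\<lambda>v. f (v + c))" and "(\<integral>v. f (v + c) \<partial>lborel) = (\<integral>v. f v \<partial>lborel)"
proof -
  have [measurable]: "f \<in> borel_measurable borel"
    using assms by auto
  have "integrable (distr lborel borel ((+) c)) f"
    using assms by (simp add: lborel_distr_plus)
  then show "integrable lborel (\<lambda>v. f (v + c))"
    by (subst (asm) integrable_distr_eq) (simp_all add: add.commute)
  show "(\<integral>v. f (v + c) \<partial>lborel) = (\<integral>v. f v \<partial>lborel)"
    using integral_distr[of "(+) c" lborel borel f] by (simp add: lborel_distr_plus add.commute)
qed

lemma nn_integral_ball_symmetric: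
  fixes f :: "'a::euclidean_space \<Rightarrow> ennreal"
  assumes [measurable]: "f \<in> borel_measurable borel"
  shows "(\<integral>\<^sup>+v. indicator (ball 0 r) v * (f (x + v) + f (x - v)) \<partial>lborel)
    = 2 * (\<integral>\<^sup>+y. indicator (ball x r) y * f y \<partial>lborel)"
proof -
  have [measurable]: "ball x r \<in> sets borel"
    by simp
  have "v \<in> ball 0 r \<longleftrightarrow> x + v \<in> ball x r" "v \<in> ball 0 r \<longleftrightarrow> x - v \<in> ball x r" for v
    by (simp_all add: dist_norm)
  then have "(\<integral>\<^sup>+v. indicator (ball 0 r) v * (f (x + v) + f (x - v)) \<partial>lborel)
    = (\<integral>\<^sup>+v. indicator (ball x r) (x + v) * f (x + v) + indicator (ball x r) (x - v) * f (x - v) \<partial>lborel)"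
    by (intro nn_integral_cong) (simp add: indicator_def distrib_left)
  also have "\<dots> = (\<integral>\<^sup>+v. indicator (ball x r) (x + v) * f (x + v) \<partial>lborel)
      + (\<integral>\<^sup>+v. indicator (ball x r) (x - v) * f (x - v) \<partial>lborel)"
    by (rule nn_integral_add) measurable
  also have "\<dots> = 2 * (\<integral>\<^sup>+y. indicator (ball x r) y * f y \<partial>lborel)"
    by (simp add: nn_integral_lborel_translate[of "\<lambda>y. indicator (ball x r) y * f y"]
        nn_integral_lborel_reflect[of "\<lambda>y. indicator (ball x r) y * f y"] mult_2)
  finally show ?thesis .
qed

lemma nn_integral_tail_small:
  fixes f :: "'a::euclidean_space \<Rightarrow> ennreal"
  assumes [measurable]: "f \<in> borel_measurable borel"
    and "(\<integral>\<^sup>+y. f y \<partial>lborel) < \<infinity>" and "e > 0"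
  obtains R where "(\<integral>\<^sup>+y. indicator {y. R \<le> norm y} y * f y \<partial>lborel) < e"
proof -
  define F where "F n y = indicator {y. real n \<le> norm y} y * f y" for n :: nat and y
  have "decseq F"
    by (intro decseq_SucI le_funI) (simp add: F_def indicator_def mult_left_mono)
  moreover have "F n \<in> borel_measurable lborel" for n
    unfolding F_def by measurable
  moreover have "(\<integral>\<^sup>+y. F 0 y \<partial>lborel) < \<infinity>"
    using assms(2) by (simp add: F_def)
  moreover have "(INF n. F n y) = 0" for y
  proof -
    obtain n :: nat where "norm y < real n" using reals_Archimedean2 by blast
    then have "F n y = 0" by (simp add: F_def)
    then show ?thesis by (metis INF_lower UNIV_I antisym zero_le)
  qed
  ultimately have "(INF n. \<integral>\<^sup>+y. F n y \<partial>lborel) = 0"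
    by (simp flip: nn_integral_monotone_convergence_INF_decseq)
  with \<open>e > 0\<close> obtain n where "(\<integral>\<^sup>+y. F n y \<partial>lborel) < e"
    by (metis INF_less_iff)
  with that show ?thesis unfolding F_def by blast
qed

lemma integrable_limit_bounded_integrals:
  fixes g :: "nat \<Rightarrow> 'a \<Rightarrow> real"
  assumes int: "\<And>n. integrable M (g n)" and nonneg: "\<And>n x. 0 \<le> g n x"
    and lim: "\<And>x. (\<lambda>n. g n x) \<longlonglongrightarrow> f x" and bound: "\<And>n. integral\<^sup>L M (g n) \<le> B"
  shows "integrable M f" and "integral\<^sup>L M f \<le> B"
proof -
  have [measurable]: "f \<in> borel_measurable M"
    using borel_measurable_LIMSEQ_real[where u=g and u'=f and M=M] lim int by auto
  have f_nonneg: "0 \<le> f x" for x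
    by (rule LIMSEQ_le_const[OF lim]) (use nonneg in blast)
  have "0 \<le> integral\<^sup>L M (g 0)"
    using nonneg by (rule Bochner_Integration.integral_nonneg)
  with bound[of 0] have "0 \<le> B"
    by linarith
  have "liminf (\<lambda>n. ennreal (g n x)) = ennreal (f x)" for x
    by (rule lim_imp_Liminf[OF trivial_limit_sequentially tendsto_ennrealI[OF lim]])
  then have "(\<integral>\<^sup>+x. f x \<partial>M) = (\<integral>\<^sup>+x. liminf (\<lambda>n. ennreal (g n x)) \<partial>M)"
    by simp
  also have "\<dots> \<le> liminf (\<lambda>n. \<integral>\<^sup>+x. g n x \<partial>M)"
    using int by (intro nn_integral_liminf) simp
  also have "\<dots> = liminf (\<lambda>n. ennreal (integral\<^sup>L M (g n)))"
    using int nonneg by (simp add: nn_integral_eq_integral)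
  also have "\<dots> \<le> ennreal B"
    using bound by (intro Liminf_le always_eventually allI ennreal_leI) simp_all
  finally have le: "(\<integral>\<^sup>+x. f x \<partial>M) \<le> ennreal B" .
  show "integrable M f"
    using f_nonneg le_less_trans[OF le ennreal_less_top] by (intro integrableI_nonneg) auto
  then have "(\<integral>\<^sup>+x. f x \<partial>M) = ennreal (integral\<^sup>L M f)"
    using f_nonneg by (simp add: nn_integral_eq_integral)
  with le \<open>0 \<le> B\<close> show "integral\<^sup>L M f \<le> B"
    by simp
qed

section \<open>Symmetric matrices with a quadratic lower bound\<close>

lemma abs_matrix_entry_le_of_quadratic_lower_bound:
  fixes A :: "real^'n^'n"
  assumes sym: "\<And>i j. A $ i $ j = A $ j $ i" and lower: "\<And>v. - c * (v \<bullet> v) \<le> v \<bullet> (A *v v)"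
    and "c \<ge> 0"
  shows "\<bar>A $ i $ j\<bar> \<le> ((A $ i $ i + c) + (A $ j $ j + c)) / 2 + c"
proof (cases "i = j")
  case True
  then show ?thesis
    using lower[of "axis i 1"] \<open>c \<ge> 0\<close> by (auto simp: inner_axis_matrix_vector_axis abs_le_iff field_simps)
next
  case False
  have "- 2 * c \<le> A $ i $ i + s * (2 * A $ i $ j) + A $ j $ j" if "s = 1 \<or> s = - 1" for s
  proof -
    have "(axis i 1 + s *\<^sub>R axis j 1) \<bullet> (axis i 1 + s *\<^sub>R axis j (1::real)) = 2"
      using False that by (auto simp: inner_add_left inner_add_right inner_axis_axis)
    moreover have "(axis i 1 + s *\<^sub>R axis j 1) \<bullet> (A *v (axis i 1 + s *\<^sub>R axis j 1))
        = A $ i $ i + s * (2 * A $ i $ j) + A $ j $ j"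
      using that sym[of i j]
      by (auto simp: matrix_vector_right_distrib matrix_vector_mult_scaleR inner_add_left
          inner_add_right inner_axis_matrix_vector_axis)
    ultimately show ?thesis
      using lower[of "axis i 1 + s *\<^sub>R axis j 1"] by simp
  qed
  from this[of 1] this[of "- 1"] have
    "- 2 * c \<le> A $ i $ i + 2 * A $ i $ j + A $ j $ j" "- 2 * c \<le> A $ i $ i - 2 * A $ i $ j + A $ j $ j"
    by simp_all
  with \<open>c \<ge> 0\<close> show ?thesis
    by (simp add: abs_le_iff field_simps)
qed

lemma norm_matrix_le_of_quadratic_lower_bound:
  fixes A :: "real^'n^'n"
  assumes "\<And>i j. A $ i $ j = A $ j $ i" and "\<And>v. - c * (v \<bullet> v) \<le> v \<bullet> (A *v v)" and "c \<ge> 0"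
  shows "norm A \<le> real CARD('n) * (\<Sum>i\<in>UNIV. A $ i $ i + c) + (real CARD('n))\<^sup>2 * c"
proof -
  have "norm A \<le> (\<Sum>i\<in>UNIV. norm (A $ i))"
    unfolding norm_vec_def by (rule L2_set_le_sum) simp
  also have "\<dots> \<le> (\<Sum>i\<in>UNIV. \<Sum>j\<in>UNIV. \<bar>A $ i $ j\<bar>)"
    by (intro sum_mono norm_le_l1_cart)
  also have "\<dots> \<le> (\<Sum>i\<in>UNIV. \<Sum>j\<in>UNIV. ((A $ i $ i + c) + (A $ j $ j + c)) / 2 + c)"
    by (intro sum_mono abs_matrix_entry_le_of_quadratic_lower_bound assms)
  also have "\<dots> = real CARD('n) * (\<Sum>i\<in>UNIV. A $ i $ i + c) + (real CARD('n))\<^sup>2 * c"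
    by (simp add: sum.distrib add_divide_distrib sum_divide_distrib[symmetric]
        sum_distrib_left[symmetric] power2_eq_square algebra_simps)
  finally show ?thesis .
qed

section \<open>Normalized positive functions with tau(u) at least T\<close>

locale vt1plus =
  fixes T :: real and u :: "real^'n \<Rightarrow> real"
  assumes T_pos: "T > 0" and u_in: "u \<in> VT1plus T"
begin

lemma u_pos: "u x > 0"
  and u_C2: "C2 u"
  and u_integrable: "integrable lborel u"
  and u_integral: "integral\<^sup>L lborel u = 1"
  and tau_u: "ereal T \<le> tau u"
  using u_in by (simp_all add: VT1plus_def)

lemma u_differentiable: "u differentiable (at x)"
  and grad_u_differentiable: "grad u differentiable (at x)"
  and hess_u_continuous: "continuous_on UNIV (hess u)"
  using u_C2 by (simp_all add: C2_def)

lemma u_continuous: "continuous_on UNIV u"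
  using u_differentiable differentiable_imp_continuous_within continuous_at_imp_continuous_on by blast

lemma u_measurable [measurable]: "u \<in> borel_measurable borel"
  using u_continuous borel_measurable_continuous_onI by blast

lemma nn_integral_u: "(\<integral>\<^sup>+y. ennreal (u y) \<partial>lborel) = 1"
  using u_integrable u_integral u_pos by (subst nn_integral_eq_integral) (auto intro: less_imp_le)

lemma has_derivative_ln_u: "((\<lambda>y. ln (u y)) has_derivative (\<lambda>h. inverse (u y) * (grad u y \<bullet> h))) (at y)"
  using has_derivative_grad[OF u_differentiable, of y] u_pos[of y]
  by (auto intro!: derivative_eq_intros)

lemma grad_ln_u: "grad (\<lambda>y. ln (u y)) y = inverse (u y) *\<^sub>R grad u y"
proof -
  have "frechet_derivative (\<lambda>y. ln (u y)) (at y) = (\<lambda>h. inverse (u y) * (grad u y \<bullet> h))"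
    by (rule frechet_derivative_at[OF has_derivative_ln_u, symmetric])
  then show ?thesis
    by (simp add: grad_def[of "\<lambda>y. ln (u y)"] vec_eq_iff inner_axis)
qed

lemma grad_ln_u_differentiable: "grad (\<lambda>y. ln (u y)) differentiable (at y)"
  using u_differentiable grad_u_differentiable u_pos[of y]
  by (simp add: grad_ln_u[abs_def])

lemma ln_u_lower_bound:
  "ln (u x) + (grad u x \<bullet> v) / u x - (v \<bullet> v) / (4 * T) \<le> ln (u (x + v))"
proof -
  have "ln (u x) + grad (\<lambda>y. ln (u y)) x \<bullet> v - (v \<bullet> v) / (4 * T) \<le> ln (u (x + v))"
    using has_derivative_ln_u grad_ln_u_differentiable T_pos
      hess_ln_quadratic_lower_bound[OF tau_u less_imp_le[OF T_pos]]
    by (intro semiconvex_lower_bound) (auto simp: differentiable_def)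
  then show ?thesis
    by (simp add: grad_ln_u field_simps)
qed

lemma u_lower_bound: "u x * exp ((grad u x \<bullet> v) / u x - (v \<bullet> v) / (4 * T)) \<le> u (x + v)"
proof -
  have "exp (ln (u x) + (grad u x \<bullet> v) / u x - (v \<bullet> v) / (4 * T)) \<le> exp (ln (u (x + v)))"
    using ln_u_lower_bound by simp
  then show ?thesis
    using u_pos[of x] u_pos[of "x + v"] by (simp add: exp_add exp_diff)
qed

lemma u_exp_grad_bound:
  "u x * exp (T * (norm (grad u x))\<^sup>2 / (u x)\<^sup>2) \<le> (4 * pi * T) powr (- real CARD('n) / 2)"
proof -
  define p where "p = inverse (u x) *\<^sub>R grad u x"
  define s where "s = (2 * T) *\<^sub>R p"
  define c where "c = u x * exp (T * (p \<bullet> p))"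
  define G where "G v = exp (- (v \<bullet> v) / (4 * T))" for v :: "real^'n"
  have "c > 0" using u_pos[of x] by (simp add: c_def)
  have square: "(grad u x \<bullet> v) / u x - (v \<bullet> v) / (4 * T) = T * (p \<bullet> p) + - ((s - v) \<bullet> (s - v)) / (4 * T)" for v
    using T_pos u_pos[of x]
    by (simp add: p_def s_def inner_diff_left inner_diff_right inner_commute field_simps power2_eq_square)
  have pointwise: "c * G (s - v) \<le> u (x + v)" for v
    using u_lower_bound[of x v] unfolding square exp_add c_def G_def by (simp add: mult.assoc)
  have "ennreal c * ennreal ((4 * pi * T) powr (real CARD('n) / 2)) = ennreal c * (\<integral>\<^sup>+v. G (s - v) \<partial>lborel)"
    using nn_integral_exp_neg_inner[OF T_pos, where 'a="real^'n"]
      nn_integral_lborel_reflect[of "\<lambda>v. ennreal (G v)" s]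
    by (simp add: G_def)
  also have "\<dots> = (\<integral>\<^sup>+v. ennreal (c * G (s - v)) \<partial>lborel)"
    using \<open>c > 0\<close> by (simp add: ennreal_mult' nn_integral_cmult G_def)
  also have "\<dots> \<le> (\<integral>\<^sup>+v. ennreal (u (x + v)) \<partial>lborel)"
    by (intro nn_integral_mono ennreal_leI pointwise)
  also have "\<dots> = 1"
    using nn_integral_lborel_translate[of "\<lambda>y. ennreal (u y)" x] nn_integral_u by simp
  finally have "ennreal (c * (4 * pi * T) powr (real CARD('n) / 2)) \<le> 1"
    using \<open>c > 0\<close> by (simp add: ennreal_mult')
  then have "c \<le> (4 * pi * T) powr (- real CARD('n) / 2)"
    using T_pos by (simp add: powr_minus_divide field_simps)
  moreover have "p \<bullet> p = (norm (grad u x))\<^sup>2 / (u x)\<^sup>2"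
    by (simp add: p_def dot_square_norm field_simps)
  ultimately show ?thesis
    by (simp add: c_def)
qed

lemma u_le_peak: "u x \<le> (4 * pi * T) powr (- real CARD('n) / 2)"
proof -
  have "u x * 1 \<le> u x * exp (T * (norm (grad u x))\<^sup>2 / (u x)\<^sup>2)"
    using u_pos[of x] T_pos by (intro mult_left_mono) auto
  then show ?thesis
    using u_exp_grad_bound[of x] by simp
qed

lemma u_symmetric_sum_lower_bound: "2 * u x * exp (- (v \<bullet> v) / (4 * T)) \<le> u (x + v) + u (x - v)"
proof -
  define a where "a = (grad u x \<bullet> v) / u x"
  define q where "q = (v \<bullet> v) / (4 * T)"
  have "2 \<le> exp a + exp (- a)"
    using exp_ge_add_one_self[of a] exp_ge_add_one_self[of "- a"] by linarith
  then have "2 * u x * exp (- q) \<le> u x * exp (- q) * (exp a + exp (- a))"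
    using u_pos[of x] by simp
  also have "\<dots> = u x * exp (a - q) + u x * exp (- a - q)"
    by (simp add: algebra_simps flip: exp_add)
  also have "\<dots> \<le> u (x + v) + u (x - v)"
    using u_lower_bound[of x v] u_lower_bound[of x "- v"] by (simp add: a_def q_def)
  finally show ?thesis
    by (simp add: q_def)
qed

lemma u_le_local_mass:
  "ennreal (u x * (exp (- 1 / (4 * T)) * unit_ball_vol (real CARD('n))))
    \<le> (\<integral>\<^sup>+y. indicator (ball x 1) y * ennreal (u y) \<partial>lborel)"
proof -
  define B where "B = ball (0::real^'n) 1"
  define m where "m = 2 * u x * exp (- 1 / (4 * T))"
  have "m \<le> u (x + v) + u (x - v)" if "v \<in> B" for v
  proof -
    have "v \<bullet> v \<le> 1"
      using that by (simp add: B_def power2_norm_eq_inner[symmetric] power_le_one)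
    then have "m \<le> 2 * u x * exp (- (v \<bullet> v) / (4 * T))"
      using u_pos[of x] T_pos by (simp add: m_def divide_right_mono)
    then show ?thesis
      using u_symmetric_sum_lower_bound[of x v] by linarith
  qed
  then have "ennreal m * indicator B v \<le> indicator B v * (ennreal (u (x + v)) + ennreal (u (x - v)))" for v
    using u_pos[of "x + v"] u_pos[of "x - v"]
    by (cases "v \<in> B") (simp_all flip: ennreal_plus add: ennreal_leI)
  then have "(\<integral>\<^sup>+v. ennreal m * indicator B v \<partial>lborel)
      \<le> (\<integral>\<^sup>+v. indicator B v * (ennreal (u (x + v)) + ennreal (u (x - v))) \<partial>lborel)"
    by (rule nn_integral_mono)
  also have "\<dots> = 2 * (\<integral>\<^sup>+y. indicator (ball x 1) y * ennreal (u y) \<partial>lborel)"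
    unfolding B_def by (rule nn_integral_ball_symmetric) simp
  also have "(\<integral>\<^sup>+v. ennreal m * indicator B v \<partial>lborel) = ennreal m * ennreal (unit_ball_vol (real CARD('n)))"
    using emeasure_ball[of 1 "0::real^'n"] by (simp add: B_def nn_integral_cmult_indicator)
  also have "\<dots> = 2 * ennreal (u x * (exp (- 1 / (4 * T)) * unit_ball_vol (real CARD('n))))"
    using u_pos[of x] by (simp add: m_def ennreal_mult' mult.assoc)
  finally show ?thesis
    by (simp add: ennreal_mult_le_mult_iff)
qed

lemma u_le_tail_mass:
  assumes "R + 1 \<le> norm x"
  shows "ennreal (u x * (exp (- 1 / (4 * T)) * unit_ball_vol (real CARD('n))))
    \<le> (\<integral>\<^sup>+y. indicator {y. R \<le> norm y} y * ennreal (u y) \<partial>lborel)"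
proof -
  have "ball x 1 \<subseteq> {y. R \<le> norm y}"
  proof
    fix y
    assume "y \<in> ball x 1"
    with norm_triangle_ineq2[of x y] assms show "y \<in> {y. R \<le> norm y}"
      by (simp add: dist_norm)
  qed
  then have "indicator (ball x 1) y * ennreal (u y) \<le> indicator {y. R \<le> norm y} y * ennreal (u y)" for y
    by (intro mult_right_mono) (auto simp: indicator_def)
  then have "(\<integral>\<^sup>+y. indicator (ball x 1) y * ennreal (u y) \<partial>lborel)
      \<le> (\<integral>\<^sup>+y. indicator {y. R \<le> norm y} y * ennreal (u y) \<partial>lborel)"
    by (rule nn_integral_mono)
  with u_le_local_mass[of x] show ?thesis
    by (rule order_trans)
qed

lemma u_tendsto_zero: "(u \<longlongrightarrow> 0) at_infinity"
proof (rule tendstoI)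
  fix e :: real
  assume "e > 0"
  define K where "K = exp (- 1 / (4 * T)) * unit_ball_vol (real CARD('n))"
  have "K > 0"
    by (simp add: K_def)
  obtain R where R: "(\<integral>\<^sup>+y. indicator {y. R \<le> norm y} y * ennreal (u y) \<partial>lborel) < ennreal (e * K)"
    using nn_integral_tail_small[of "\<lambda>y. ennreal (u y)" "ennreal (e * K)"] nn_integral_u \<open>e > 0\<close> \<open>K > 0\<close>
    by auto
  have "u x < e" if "R + 1 \<le> norm x" for x
  proof -
    have "ennreal (u x * K) < ennreal (e * K)"
      using u_le_tail_mass[OF that] R unfolding K_def by (rule le_less_trans)
    then have "u x * K < e * K"
      using u_pos[of x] \<open>K > 0\<close> by (subst (asm) ennreal_less_iff) simp_all
    with \<open>K > 0\<close> show ?thesis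
      by simp
  qed
  then have "\<forall>x. R + 1 \<le> norm x \<longrightarrow> dist (u x) 0 < e"
    using u_pos by (simp add: dist_real_def less_imp_le)
  then show "eventually (\<lambda>x. dist (u x) 0 < e) at_infinity"
    unfolding eventually_at_infinity by blast
qed

lemma u_attains_max:
  obtains z where "\<And>x. u x \<le> u z"
proof -
  have "eventually (\<lambda>x. dist (u x) 0 < u 0) at_infinity"
    using tendstoD[OF u_tendsto_zero u_pos[of 0]] .
  then obtain R where "\<forall>x. R \<le> norm x \<longrightarrow> dist (u x) 0 < u 0"
    unfolding eventually_at_infinity by blast
  then have R: "u x < u 0" if "R \<le> norm x" for x
    using that u_pos[of x] by (auto simp: dist_real_def)
  have "R > 0"
    using R[of 0] by force
  have "cball (0::real^'n) R \<noteq> {}"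
    using \<open>R > 0\<close> by simp
  from continuous_attains_sup[OF compact_cball this continuous_on_subset[OF u_continuous subset_UNIV]]
  obtain z where z: "z \<in> cball 0 R" "\<And>y. y \<in> cball 0 R \<Longrightarrow> u y \<le> u z"
    by blast
  have "u x \<le> u z" for x
  proof (cases "x \<in> cball 0 R")
    case False
    then have "u x < u 0"
      by (intro R) (simp add: not_le less_imp_le)
    also have "u 0 \<le> u z"
      using z(2)[of 0] \<open>R > 0\<close> by simp
    finally show ?thesis by simp
  qed (use z in auto)
  with that show ?thesis by blast
qed

lemma grad_u_zero_at_max:
  assumes "\<And>x. u x \<le> u z"
  shows "grad u z = 0"
proof -
  have "(\<lambda>h. grad u z \<bullet> h) = (\<lambda>h. 0)"
    using assms by (intro differential_zero_maxmin[OF UNIV_I open_UNIV has_derivative_grad[OF u_differentiable]]) auto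
  then have "grad u z \<bullet> grad u z = 0"
    by metis
  then show ?thesis
    by simp
qed

lemma u_gaussian_bounds:
  "\<exists>z. \<forall>x. 0 < u z * exp (- (norm (x - z))\<^sup>2 / (4 * T)) \<and>
             u z * exp (- (norm (x - z))\<^sup>2 / (4 * T)) \<le> u x \<and>
             u x \<le> u z \<and>
             u z \<le> (4 * pi * T) powr (- real CARD('n) / 2)"
proof -
  obtain z where max: "\<And>x. u x \<le> u z"
    using u_attains_max by blast
  have "u z * exp (- (norm (x - z))\<^sup>2 / (4 * T)) \<le> u x" for x
    using u_lower_bound[of z "x - z"] grad_u_zero_at_max[OF max] by (simp add: power2_norm_eq_inner)
  with max show ?thesis
    using u_pos u_le_peak by (intro exI[of _ z]) auto
qed

lemma grad_u_norm_sq_bound: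
  "(norm (grad u x))\<^sup>2 \<le> 4 * pi / exp 1 * (4 * pi * T) powr (- (real CARD('n) + 2) / 2) * u x"
proof -
  define A where "A = (4 * pi * T) powr (- real CARD('n) / 2)"
  have "A > 0" "u x > 0"
    using T_pos u_pos by (simp_all add: A_def)
  have "exp (T * (norm (grad u x))\<^sup>2 / (u x)\<^sup>2) \<le> A / u x"
    using u_exp_grad_bound[of x] \<open>u x > 0\<close> by (simp add: A_def field_simps)
  then have "T * (norm (grad u x))\<^sup>2 / (u x)\<^sup>2 \<le> ln (A / u x)"
    using \<open>A > 0\<close> \<open>u x > 0\<close> by (simp add: ln_ge_iff)
  also have "\<dots> \<le> A / u x / exp 1"
    using ln_le_minus_one[of "A / u x / exp 1"] \<open>A > 0\<close> \<open>u x > 0\<close> by (simp add: ln_div ln_mult)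
  finally have "(norm (grad u x))\<^sup>2 \<le> A / (exp 1 * T) * u x"
    using T_pos \<open>u x > 0\<close> by (simp add: field_simps power2_eq_square)
  also have "A / (exp 1 * T) = 4 * pi / exp 1 * (4 * pi * T) powr (- (real CARD('n) + 2) / 2)"
  proof -
    have "- (real CARD('n) + 2) / 2 = - real CARD('n) / 2 + - 1"
      by (simp add: field_simps)
    then have "(4 * pi * T) powr (- (real CARD('n) + 2) / 2) = A * (4 * pi * T) powr (- 1)"
      unfolding A_def by (simp only: powr_add)
    then show ?thesis
      using T_pos by (simp add: powr_neg_one field_simps)
  qed
  finally show ?thesis .
qed

lemma grad_u_bound_le_const:
  "4 * pi / exp 1 * (4 * pi * T) powr (- (real CARD('n) + 2) / 2) * u x
    \<le> 4 * pi / exp 1 * (4 * pi * T) powr (- real CARD('n) - 1)"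
proof -
  have "- (real CARD('n) + 2) / 2 + - real CARD('n) / 2 = - real CARD('n) - 1"
    by (simp add: field_simps)
  then have "(4 * pi * T) powr (- (real CARD('n) + 2) / 2) * (4 * pi * T) powr (- real CARD('n) / 2)
      = (4 * pi * T) powr (- real CARD('n) - 1)"
    by (metis powr_add)
  moreover have "(4 * pi * T) powr (- (real CARD('n) + 2) / 2) * u x
      \<le> (4 * pi * T) powr (- (real CARD('n) + 2) / 2) * (4 * pi * T) powr (- real CARD('n) / 2)"
    using u_le_peak[of x] by (rule mult_left_mono) simp
  ultimately show ?thesis
    unfolding mult.assoc[of "4 * pi / exp 1"] by (intro mult_left_mono) simp_all
qed

lemma grad_u_tendsto_zero: "((\<lambda>x. norm (grad u x)) \<longlongrightarrow> 0) at_infinity"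
proof -
  define C where "C = 4 * pi / exp 1 * (4 * pi * T) powr (- (real CARD('n) + 2) / 2)"
  have "((\<lambda>x. sqrt (C * u x)) \<longlongrightarrow> sqrt (C * 0)) at_infinity"
    by (intro tendsto_intros u_tendsto_zero)
  then have lim: "((\<lambda>x. sqrt (C * u x)) \<longlongrightarrow> 0) at_infinity"
    by simp
  have "norm (norm (grad u x)) \<le> sqrt (C * u x)" for x
    using grad_u_norm_sq_bound[of x] unfolding C_def by (simp add: real_le_rsqrt)
  then show ?thesis
    by (intro Lim_null_comparison[OF _ lim]) simp
qed

text \<open>Since \<open>hess (ln u) = hess u / u - (grad u) (grad u)\<^sup>T / u\<^sup>2\<close> and the rank-one term
  has the right sign, the lower bound for \<open>hess (ln u)\<close> passes to \<open>hess u\<close>.\<close>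

lemma hess_u_quadratic_lower_bound: "- (u x / (2 * T)) * (v \<bullet> v) \<le> v \<bullet> (hess u x *v v)"
proof -
  define a b c where "a = v \<bullet> (hess u x *v v)" and "b = grad u x \<bullet> v" and "c = u x"
  have "c > 0"
    using u_pos by (simp add: c_def)
  have du: "((\<lambda>t. u (x + t *\<^sub>R v)) has_real_derivative b) (at 0)"
    using has_real_derivative_along_line[OF u_differentiable, where x=x and t=0 and v=v]
    by (simp add: b_def)
  have dgrad: "((\<lambda>t. grad u (x + t *\<^sub>R v) \<bullet> v) has_real_derivative a) (at 0)"
    using has_real_derivative_grad_along_line[OF grad_u_differentiable, where x=x and t=0 and v=v]
    by (simp add: a_def)
  have "((\<lambda>t. grad u (x + t *\<^sub>R v) \<bullet> v / u (x + t *\<^sub>R v)) has_real_derivative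
      (a * c - b * b) / (c * c)) (at 0)"
    using DERIV_divide[OF dgrad du] u_pos[of x] by (simp add: b_def c_def)
  moreover have "(\<lambda>t. grad u (x + t *\<^sub>R v) \<bullet> v / u (x + t *\<^sub>R v))
      = (\<lambda>t. grad (\<lambda>y. ln (u y)) (x + t *\<^sub>R v) \<bullet> v)"
    by (simp add: grad_ln_u divide_inverse mult.commute)
  ultimately have "((\<lambda>t. grad (\<lambda>y. ln (u y)) (x + t *\<^sub>R v) \<bullet> v) has_real_derivative
      (a * c - b * b) / (c * c)) (at 0)"
    by simp
  moreover have "((\<lambda>t. grad (\<lambda>y. ln (u y)) (x + t *\<^sub>R v) \<bullet> v) has_real_derivative
      v \<bullet> (hess (\<lambda>y. ln (u y)) x *v v)) (at 0)"
    using has_real_derivative_grad_along_line[OF grad_ln_u_differentiable, where x=x and t=0 and v=v]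
    by simp
  ultimately have "v \<bullet> (hess (\<lambda>y. ln (u y)) x *v v) = (a * c - b * b) / (c * c)"
    by (rule DERIV_unique[rotated])
  with hess_ln_quadratic_lower_bound[OF tau_u less_imp_le[OF T_pos], of v x]
  have "0 \<le> 2 * T * ((a * c - b * b) / (c * c)) + v \<bullet> v"
    by simp
  then have "0 \<le> (2 * T * ((a * c - b * b) / (c * c)) + v \<bullet> v) * (c * c)"
    using \<open>c > 0\<close> by simp
  then have "0 \<le> 2 * T * (a * c - b * b) + (v \<bullet> v) * (c * c)"
    using \<open>c > 0\<close> by (simp add: distrib_right)
  moreover have "0 \<le> 2 * T * (b * b)"
    using T_pos by simp
  ultimately have "0 \<le> (2 * T * a + (v \<bullet> v) * c) * c"
    by (simp add: algebra_simps)
  then have "0 \<le> 2 * T * a + (v \<bullet> v) * c"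
    using \<open>c > 0\<close> by (simp add: zero_le_mult_iff)
  then show ?thesis
    using T_pos by (simp add: a_def c_def field_simps)
qed

lemma norm_hess_u_bound:
  "norm (hess u x) \<le> real CARD('n) * (\<Sum>i\<in>UNIV. hess u x $ i $ i + u x / (2 * T))
    + (real CARD('n))\<^sup>2 * (u x / (2 * T))"
  using hess_symmetric[OF u_C2] hess_u_quadratic_lower_bound u_pos[of x] T_pos
  by (intro norm_matrix_le_of_quadratic_lower_bound) auto

lemma LIMSEQ_one_minus_exp_neg_square_over_square:
  "(\<lambda>n. (1 - exp (- (inverse (real (Suc n)))\<^sup>2 / (4 * T))) / (inverse (real (Suc n)))\<^sup>2)
    \<longlonglongrightarrow> 1 / (4 * T)"
proof -
  have "(\<lambda>n. (1 - exp (- (inverse (real (Suc n)))\<^sup>2 / (4 * T))) / (inverse (real (Suc n)))\<^sup>2)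
    \<longlonglongrightarrow> inverse T / 4"
    using T_pos by real_asymp
  then show ?thesis
    by (simp add: field_simps)
qed

text \<open>The damping factor \<open>exp (-h\<^sup>2/(4T))\<close> makes the second difference nonnegative
  (by \<open>u_symmetric_sum_lower_bound\<close>); it contributes the extra term \<open>u/(2T)\<close> in the limit.\<close>

definition damped_second_difference :: "'n \<Rightarrow> real \<Rightarrow> real^'n \<Rightarrow> real" where
  "damped_second_difference i h x =
    (u (x + h *\<^sub>R axis i 1) + u (x - h *\<^sub>R axis i 1) - 2 * u x * exp (- h\<^sup>2 / (4 * T))) / h\<^sup>2"

lemma damped_second_difference_nonneg: "0 \<le> damped_second_difference i h x"
  using u_symmetric_sum_lower_bound[of x "h *\<^sub>R axis i 1"]
  by (simp add: damped_second_difference_def inner_axis_axis power2_eq_square)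

lemma integral_u_translate:
  "integrable lborel (\<lambda>x. u (x + c))" "(\<integral>x. u (x + c) \<partial>lborel) = 1"
  "integrable lborel (\<lambda>x. u (x - c))" "(\<integral>x. u (x - c) \<partial>lborel) = 1"
  using integrable_lborel_translate[OF u_integrable, of c] integrable_lborel_translate[OF u_integrable, of "- c"]
    u_integral by simp_all

lemma integrable_damped_second_difference: "integrable lborel (damped_second_difference i h)"
  unfolding damped_second_difference_def
  by (intro integrable_divide Bochner_Integration.integrable_diff Bochner_Integration.integrable_add
      integrable_mult_left integrable_mult_right integral_u_translate u_integrable)

lemma integral_damped_second_difference_le:
  assumes "h \<noteq> 0"
  shows "integral\<^sup>L lborel (damped_second_difference i h) \<le> 1 / (2 * T)"
proof -
  define E where "E = exp (- h\<^sup>2 / (4 * T))"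
  have "integral\<^sup>L lborel (damped_second_difference i h)
      = (\<integral>x. u (x + h *\<^sub>R axis i 1) + u (x - h *\<^sub>R axis i 1) - 2 * E * u x \<partial>lborel) / h\<^sup>2"
    unfolding damped_second_difference_def E_def by (simp add: mult_ac)
  also have "\<dots> = (1 + 1 - 2 * E * 1) / h\<^sup>2"
    using integral_u_translate u_integrable u_integral by simp
  also have "\<dots> \<le> 1 / (2 * T)"
  proof -
    have "1 - h\<^sup>2 / (4 * T) \<le> E"
      using exp_ge_add_one_self[of "- h\<^sup>2 / (4 * T)"] by (simp add: E_def)
    then show ?thesis
      using assms T_pos by (simp add: field_simps)
  qed
  finally show ?thesis .
qed

lemma damped_second_difference_taylor:
  assumes "h > 0"
  obtains \<xi> \<zeta> where "dist \<xi> x \<le> h" "dist \<zeta> x \<le> h"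
    "damped_second_difference i h x = (hess u \<xi> $ i $ i + hess u \<zeta> $ i $ i) / 2
      + 2 * u x * ((1 - exp (- h\<^sup>2 / (4 * T))) / h\<^sup>2)"
proof -
  obtain \<xi> where \<xi>: "dist \<xi> x \<le> \<bar>h\<bar>"
    "u (x + h *\<^sub>R axis i 1) = u x + h * grad u x $ i + h\<^sup>2 / 2 * hess u \<xi> $ i $ i"
    by (rule second_order_taylor_axis[OF u_differentiable grad_u_differentiable])
  obtain \<zeta> where \<zeta>: "dist \<zeta> x \<le> \<bar>- h\<bar>"
    "u (x + (- h) *\<^sub>R axis i 1) = u x + (- h) * grad u x $ i + (- h)\<^sup>2 / 2 * hess u \<zeta> $ i $ i"
    by (rule second_order_taylor_axis[OF u_differentiable grad_u_differentiable])
  have \<zeta>': "u (x - h *\<^sub>R axis i 1) = u x - h * grad u x $ i + h\<^sup>2 / 2 * hess u \<zeta> $ i $ i"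
    using \<zeta>(2) by simp
  have "u (x + h *\<^sub>R axis i 1) + u (x - h *\<^sub>R axis i 1) - 2 * u x * exp (- h\<^sup>2 / (4 * T))
      = h\<^sup>2 * ((hess u \<xi> $ i $ i + hess u \<zeta> $ i $ i) / 2) + 2 * u x * (1 - exp (- h\<^sup>2 / (4 * T)))"
    unfolding \<xi>(2) \<zeta>' by (simp add: algebra_simps)
  with that \<xi>(1) \<zeta>(1) \<open>h > 0\<close> show ?thesis
    by (simp add: damped_second_difference_def add_divide_distrib)
qed

lemma damped_second_difference_tendsto:
  "(\<lambda>n. damped_second_difference i (inverse (real (Suc n))) x) \<longlonglongrightarrow> hess u x $ i $ i + u x / (2 * T)"
proof -
  define h where "h n = inverse (real (Suc n))" for n
  have "\<exists>\<xi> \<zeta>. dist \<xi> x \<le> h n \<and> dist \<zeta> x \<le> h n \<and>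
      damped_second_difference i (h n) x = (hess u \<xi> $ i $ i + hess u \<zeta> $ i $ i) / 2
        + 2 * u x * ((1 - exp (- (h n)\<^sup>2 / (4 * T))) / (h n)\<^sup>2)" for n
    by (rule damped_second_difference_taylor[of "h n"]) (auto simp: h_def)
  then obtain \<xi> \<zeta> where \<xi>\<zeta>: "\<And>n. dist (\<xi> n) x \<le> h n" "\<And>n. dist (\<zeta> n) x \<le> h n"
    "\<And>n. damped_second_difference i (h n) x = (hess u (\<xi> n) $ i $ i + hess u (\<zeta> n) $ i $ i) / 2
        + 2 * u x * ((1 - exp (- (h n)\<^sup>2 / (4 * T))) / (h n)\<^sup>2)"
    by metis
  have "isCont (hess u) x"
    using hess_u_continuous by (simp add: continuous_on_eq_continuous_at)
  have l1: "(\<lambda>n. hess u (\<xi> n) $ i $ i) \<longlonglongrightarrow> hess u x $ i $ i"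
    using \<xi>\<zeta>(1) unfolding h_def
    by (intro tendsto_vec_nth isCont_tendsto_compose[OF \<open>isCont (hess u) x\<close>] LIMSEQ_dist_le_inverse_Suc[where c=1]) simp
  have l2: "(\<lambda>n. hess u (\<zeta> n) $ i $ i) \<longlonglongrightarrow> hess u x $ i $ i"
    using \<xi>\<zeta>(2) unfolding h_def
    by (intro tendsto_vec_nth isCont_tendsto_compose[OF \<open>isCont (hess u) x\<close>] LIMSEQ_dist_le_inverse_Suc[where c=1]) simp
  have l3: "(\<lambda>n. (1 - exp (- (h n)\<^sup>2 / (4 * T))) / (h n)\<^sup>2) \<longlonglongrightarrow> 1 / (4 * T)"
    unfolding h_def by (rule LIMSEQ_one_minus_exp_neg_square_over_square)
  have lim: "(\<lambda>n. (hess u (\<xi> n) $ i $ i + hess u (\<zeta> n) $ i $ i) / 2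
      + 2 * u x * ((1 - exp (- (h n)\<^sup>2 / (4 * T))) / (h n)\<^sup>2))
      \<longlonglongrightarrow> (hess u x $ i $ i + hess u x $ i $ i) / 2 + 2 * u x * (1 / (4 * T))"
    by (intro tendsto_add tendsto_divide tendsto_mult l1 l2 l3 tendsto_const) simp
  have "(\<lambda>n. damped_second_difference i (h n) x) = (\<lambda>n. (hess u (\<xi> n) $ i $ i + hess u (\<zeta> n) $ i $ i) / 2
      + 2 * u x * ((1 - exp (- (h n)\<^sup>2 / (4 * T))) / (h n)\<^sup>2))"
    using \<xi>\<zeta>(3) by (rule ext)
  moreover have "(hess u x $ i $ i + hess u x $ i $ i) / 2 + 2 * u x * (1 / (4 * T))
      = hess u x $ i $ i + u x / (2 * T)"
    by (simp add: field_simps)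
  ultimately show ?thesis
    using lim unfolding h_def by simp
qed

lemma hess_diag_shift_integrable:
  "integrable lborel (\<lambda>x. hess u x $ i $ i + u x / (2 * T))"
  "(\<integral>x. hess u x $ i $ i + u x / (2 * T) \<partial>lborel) \<le> 1 / (2 * T)"
  using integrable_limit_bounded_integrals[OF integrable_damped_second_difference
      damped_second_difference_nonneg damped_second_difference_tendsto
      integral_damped_second_difference_le]
  by simp_all

lemma norm_hess_u_integrable:
  "integrable lborel (\<lambda>x. norm (hess u x))"
  "(\<integral>x. norm (hess u x) \<partial>lborel) \<le> (real CARD('n))\<^sup>2 / T"
proof -
  define N where "N = real CARD('n)"
  define F where "F x = N * (\<Sum>i\<in>UNIV. hess u x $ i $ i + u x / (2 * T)) + N\<^sup>2 * (u x / (2 * T))" for x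
  have "integrable lborel F"
    unfolding F_def using hess_diag_shift_integrable(1) u_integrable by auto
  moreover have "(\<lambda>x. norm (hess u x)) \<in> borel_measurable lborel"
    using borel_measurable_continuous_onI[OF continuous_on_norm[OF hess_u_continuous]] by simp
  moreover have norm_le: "norm (hess u x) \<le> F x" for x
    unfolding F_def N_def by (rule norm_hess_u_bound)
  then have "AE x in lborel. norm (norm (hess u x)) \<le> norm (F x)"
    by (auto intro: order_trans[OF _ abs_ge_self])
  ultimately show int: "integrable lborel (\<lambda>x. norm (hess u x))"
    by (rule Bochner_Integration.integrable_bound)
  have "(\<integral>x. norm (hess u x) \<partial>lborel) \<le> integral\<^sup>L lborel F"
    using int \<open>integrable lborel F\<close> norm_le by (rule integral_mono)
  also have "\<dots> = N * (\<Sum>i\<in>UNIV. \<integral>x. hess u x $ i $ i + u x / (2 * T) \<partial>lborel) + N\<^sup>2 * (1 / (2 * T))"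
    unfolding F_def using hess_diag_shift_integrable(1) u_integrable u_integral by simp
  also have "\<dots> \<le> N * (\<Sum>i\<in>(UNIV::'n set). 1 / (2 * T)) + N\<^sup>2 * (1 / (2 * T))"
    using hess_diag_shift_integrable(2) by (intro add_right_mono mult_left_mono sum_mono) (simp_all add: N_def)
  also have "\<dots> = N\<^sup>2 / T"
    using T_pos by (simp add: N_def power2_eq_square field_simps)
  finally show "(\<integral>x. norm (hess u x) \<partial>lborel) \<le> (real CARD('n))\<^sup>2 / T"
    by (simp add: N_def)
qed

end

theorem mainTheorem15:
  shows "(\<forall>(T::real) (u::real^'n \<Rightarrow> real). T > 0 \<and> u \<in> VT1plus T \<longrightarrow>
      ((u \<longlongrightarrow> 0) at_infinity \<and>
       (\<exists>z0. \<forall>x. 0 < u z0 * exp (- (norm (x - z0))\<^sup>2 / (4 * T)) \<and>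
                 u z0 * exp (- (norm (x - z0))\<^sup>2 / (4 * T)) \<le> u x \<and>
                 u x \<le> u z0 \<and>
                 u z0 \<le> (4 * pi * T) powr (- real CARD('n) / 2)))
    \<and> (((\<lambda>x. norm (grad u x)) \<longlongrightarrow> 0) at_infinity \<and>
       (\<forall>x. (norm (grad u x))\<^sup>2 \<le> 4 * pi / exp 1 * (4 * pi * T) powr (- (real CARD('n) + 2) / 2) * u x \<and>
            4 * pi / exp 1 * (4 * pi * T) powr (- (real CARD('n) + 2) / 2) * u x
              \<le> 4 * pi / exp 1 * (4 * pi * T) powr (- real CARD('n) - 1)))
    \<and> integrable lborel (\<lambda>x. norm (hess u x)))
   \<and> (\<exists>C1>0. \<forall>(T::real) (u::real^'n \<Rightarrow> real). T > 0 \<and> u \<in> VT1plus T \<longrightarrow>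
        integral\<^sup>L lborel (\<lambda>x. norm (hess u x)) \<le> C1 / T)"
proof -
  have vt: "vt1plus T u" if "T > 0 \<and> u \<in> VT1plus T" for T and u :: "real^'n \<Rightarrow> real"
    using that by unfold_locales auto
  have "(real CARD('n))\<^sup>2 > 0"
    by simp
  then show ?thesis
    using vt1plus.u_tendsto_zero[OF vt] vt1plus.u_gaussian_bounds[OF vt]
        vt1plus.grad_u_tendsto_zero[OF vt] vt1plus.grad_u_norm_sq_bound[OF vt]
        vt1plus.grad_u_bound_le_const[OF vt] vt1plus.norm_hess_u_integrable[OF vt]
    by (intro conjI allI impI exI[of _ "(real CARD('n))\<^sup>2"]) auto
qed

end
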